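(* Let $k\ge 4$ be even, $1\le s\le k-1$, and let $G$ be a $k$-uniform $s$-cycle which is not regular. Then $G$ is odd-bipartite.
   Context: A $k$-uniform $s$-cycle with $m$ edges has vertex set $\mathbb{Z}_n$, $n=m(k-s)$ (vertex $n+i$ identified with $i$), and edges $e_j=\{j(k-s)+1,\ldots,j(k-s)+k\}$, $j=0,\ldots,m-1$; it is assumed that $n\ge 2k-s$. A hypergraph is regular if all vertex degrees (numbers of edges containing the vertex) are equal. A $k$-uniform hypergraph with $k$ even and vertex set $V$ is odd-bipartite if either it has no edges or there is a partition $V=V_1\cup V_2$ with $V_1,V_2\ne\emptyset$ such that every edge intersects $V_1$ in an odd number of vertices. *)

theory Defs
  imports Main
begin

text \<open>Vertices of the k-uniform s-cycle with m edges: Z_n with n = m(k-s),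
  represented as {0..<n} (vertex n identified with 0).\<close>

definition scycle_vertices :: "nat \<Rightarrow> nat \<Rightarrow> nat \<Rightarrow> nat set" where
  "scycle_vertices k s m = {0..<m * (k - s)}"

definition scycle_edge :: "nat \<Rightarrow> nat \<Rightarrow> nat \<Rightarrow> nat \<Rightarrow> nat set" where
  "scycle_edge k s m j = {(j * (k - s) + i) mod (m * (k - s)) | i. i \<in> {1..k}}"

definition scycle_edges :: "nat \<Rightarrow> nat \<Rightarrow> nat \<Rightarrow> nat set set" where
  "scycle_edges k s m = scycle_edge k s m ` {0..<m}"

definition degree :: "'a set set \<Rightarrow> 'a \<Rightarrow> nat" where
  "degree E v = card {e \<in> E. v \<in> e}"

definition hg_regular :: "'a set \<Rightarrow> 'a set set \<Rightarrow> bool" where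
  "hg_regular V E \<longleftrightarrow> (\<forall>u\<in>V. \<forall>v\<in>V. degree E u = degree E v)"

definition odd_bipartite :: "'a set \<Rightarrow> 'a set set \<Rightarrow> bool" where
  "odd_bipartite V E \<longleftrightarrow> E = {} \<or>
     (\<exists>V1 V2. V1 \<union> V2 = V \<and> V1 \<inter> V2 = {} \<and> V1 \<noteq> {} \<and> V2 \<noteq> {} \<and>
        (\<forall>e\<in>E. odd (card (e \<inter> V1))))"

end

theory Submission
  imports Defs "HOL-Number_Theory.Cong"
begin

text \<open>With \<open>d = k - s\<close>, the edges are the arcs of \<open>k\<close> consecutive vertices of \<open>\<int>/md\<close>
  starting right after the multiples of \<open>d\<close>. A vertex \<open>v\<close> therefore lies in as many edges as
  there are \<open>t < k\<close> with \<open>t \<equiv> v - 1 (mod d)\<close>. If \<open>d\<close> divides \<open>k\<close>, this number is \<open>k / d\<close>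
  for every \<open>v\<close> and the hypergraph is regular. Otherwise some residue class occurs an odd
  number of times among the \<open>k\<close> positions of an arc, and the vertices of the corresponding
  residue class modulo \<open>d\<close> meet every edge in that odd number of vertices.\<close>

lemma card_residue_class:
  fixes d b k :: nat
  assumes "b < d"
  shows "card {t \<in> {0..<k}. t mod d = b} = k div d + (if b < k mod d then 1 else 0)"
proof (induction k)
  case 0
  then show ?case by simp
next
  case (Suc k)
  have "{t \<in> {0..<Suc k}. t mod d = b}
      = (if k mod d = b then insert k else id) {t \<in> {0..<k}. t mod d = b}"
    by (auto simp: less_Suc_eq)
  then have "card {t \<in> {0..<Suc k}. t mod d = b}
      = card {t \<in> {0..<k}. t mod d = b} + (if k mod d = b then 1 else 0)"
    by simp
  then show ?case
    using Suc.IH assms by (auto simp: div_Suc mod_Suc)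
qed

definition cyclic_arc :: "nat \<Rightarrow> nat \<Rightarrow> nat \<Rightarrow> nat set" where
  "cyclic_arc n p k = (\<lambda>i. (p + i) mod n) ` {1..k}"

text \<open>\<open>(v + n - Suc p) mod n\<close> is \<open>v - p - 1\<close> computed in \<open>\<int>/n\<close>, i.e. the position of \<open>v\<close>
  in the arc counted from \<open>0\<close>.\<close>

lemma mem_cyclic_arc_iff:
  assumes "p < n" "v < n"
  shows "v \<in> cyclic_arc n p k \<longleftrightarrow> (v + n - Suc p) mod n < k"
proof
  assume "v \<in> cyclic_arc n p k"
  then obtain i where i: "1 \<le> i" "i \<le> k" "v = (p + i) mod n"
    by (auto simp: cyclic_arc_def)
  then have "[(v + n - Suc p) + Suc p = (i - 1) + Suc p] (mod n)"
    using assms by (simp add: cong_def add.commute)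
  then have "(v + n - Suc p) mod n = (i - 1) mod n"
    unfolding cong_add_rcancel_nat by (simp add: cong_def)
  then show "(v + n - Suc p) mod n < k"
    using mod_less_eq_dividend[of "i - 1" n] i by linarith
next
  assume lt: "(v + n - Suc p) mod n < k"
  have "(p + Suc ((v + n - Suc p) mod n)) mod n = (Suc p + (v + n - Suc p)) mod n"
    by (metis add_Suc_right add_Suc mod_Suc_eq mod_add_right_eq)
  also have "\<dots> = v"
    using assms by simp
  finally show "v \<in> cyclic_arc n p k"
    unfolding cyclic_arc_def using lt
    by (intro image_eqI[where x = "Suc ((v + n - Suc p) mod n)", OF sym]) auto
qed

lemma inj_on_cyclic_arc:
  assumes "0 < k" "k < n"
  shows "inj_on (\<lambda>p. cyclic_arc n p k) {0..<n}"
proof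
  fix p p' assume p: "p \<in> {0..<n}" and p': "p' \<in> {0..<n}"
    and eq: "cyclic_arc n p k = cyclic_arc n p' k"
  have "p < n" "p' < n"
    using p p' by simp_all
  define x where "x = (p + n - Suc p') mod n"
  have "p \<notin> cyclic_arc n p k"
    using p assms by (simp add: mem_cyclic_arc_iff)
  then have "k \<le> x"
    using p p' eq by (simp add: mem_cyclic_arc_iff x_def)
  have "Suc p mod n \<in> cyclic_arc n p k"
    unfolding cyclic_arc_def using assms by (intro image_eqI[where x=1]) auto
  then have "(Suc p mod n + n - Suc p') mod n < k"
    using p p' eq assms by (simp add: mem_cyclic_arc_iff)
  moreover have "(Suc p mod n + n - Suc p') mod n = Suc x mod n"
  proof -
    have "(Suc p mod n + n - Suc p') mod n = (Suc p mod n + (n - Suc p')) mod n"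
      using p' by simp
    also have "\<dots> = Suc (p + (n - Suc p')) mod n"
      by (simp add: mod_add_left_eq)
    also have "\<dots> = Suc x mod n"
      using p' by (simp add: x_def mod_Suc_eq)
    finally show ?thesis .
  qed
  ultimately have "Suc x mod n < k"
    by simp
  have "x = n - 1"
  proof (rule ccontr)
    assume "x \<noteq> n - 1"
    moreover have "x < n"
      using assms by (simp add: x_def)
    ultimately have "Suc x mod n = Suc x"
      by simp
    with \<open>Suc x mod n < k\<close> \<open>k \<le> x\<close> show False
      by simp
  qed
  show "p = p'"
  proof (cases "p' < p")
    case True
    then have "p + n - Suc p' = (p - Suc p') + n"
      by simp
    then have "x = (p - Suc p' + n) mod n"
      unfolding x_def by (rule arg_cong)
    also have "\<dots> = p - Suc p'"
      using p by simp
    finally show ?thesis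
      using \<open>x = n - 1\<close> \<open>p < n\<close> True by linarith
  next
    case False
    then have "x = p + n - Suc p'"
      using p' by (simp add: x_def)
    with \<open>x = n - 1\<close> \<open>p' < n\<close> False show ?thesis by linarith
  qed
qed

lemma bij_betw_cyclic_arc:
  assumes "k \<le> n"
  shows "bij_betw (\<lambda>t. (p + Suc t) mod n) {0..<k} (cyclic_arc n p k)"
proof (rule bij_betw_imageI)
  show "inj_on (\<lambda>t. (p + Suc t) mod n) {0..<k}"
  proof
    fix s t assume "s \<in> {0..<k}" "t \<in> {0..<k}" "(p + Suc s) mod n = (p + Suc t) mod n"
    then have "[Suc p + s = Suc p + t] (mod n)"
      by (simp add: cong_def)
    then have "[s = t] (mod n)"
      by (simp only: cong_add_lcancel_nat)
    then show "s = t"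
      using \<open>s \<in> {0..<k}\<close> \<open>t \<in> {0..<k}\<close> assms by (simp add: cong_def)
  qed
  have shift: "{1..k} = Suc ` {0..<k}"
    by (simp add: image_Suc_atLeastLessThan atLeastLessThanSuc_atLeastAtMost)
  show "(\<lambda>t. (p + Suc t) mod n) ` {0..<k} = cyclic_arc n p k"
    unfolding cyclic_arc_def shift image_image ..
qed

lemma bij_betw_diff_multiples_mod:
  fixes w m d :: nat
  assumes "0 < d" "m * d \<le> w + d"
  shows "bij_betw (\<lambda>j. (w - j * d) mod (m * d)) {0..<m} {t \<in> {0..<m * d}. t mod d = w mod d}"
    (is "bij_betw ?f _ ?T")
proof -
  have le_w: "j * d \<le> w" if "j < m" for j
  proof -
    have "Suc j * d \<le> m * d"
      using that by (intro mult_le_mono1) simp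
    then show ?thesis using assms by simp
  qed
  have inj: "inj_on ?f {0..<m}"
  proof (rule linorder_inj_onI')
    fix i j assume "i \<in> {0..<m}" "j \<in> {0..<m}" "i < j"
    then have "w - i * d = (w - j * d) + (j - i) * d"
      using le_w by (simp add: diff_mult_distrib)
    moreover have "(j - i) * d mod (m * d) \<noteq> 0"
    proof -
      have "0 < (j - i) * d" "(j - i) * d < m * d"
        using \<open>i < j\<close> \<open>j \<in> {0..<m}\<close> assms by auto
      then show ?thesis by simp
    qed
    ultimately show "?f i \<noteq> ?f j"
      using cong_add_lcancel_0_nat[of "w - j * d" "(j - i) * d" "m * d"]
      by (simp add: cong_def)
  qed
  have "?f ` {0..<m} \<subseteq> ?T"
  proof
    fix t assume "t \<in> ?f ` {0..<m}"
    then obtain j where j: "j < m" "t = ?f j" by auto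
    have "w mod d = ((w - j * d) + j * d) mod d"
      using le_w[OF j(1)] by simp
    then show "t \<in> ?T"
      using j assms by (simp add: mod_mod_cancel)
  qed
  moreover have "card ?T = card (?f ` {0..<m})"
    using card_residue_class[of "w mod d" d "m * d"] assms inj by (simp add: card_image)
  ultimately show ?thesis
    using inj by (simp add: bij_betw_def card_subset_eq)
qed

definition arc_family :: "nat \<Rightarrow> nat \<Rightarrow> nat \<Rightarrow> nat set set" where
  "arc_family m d k = (\<lambda>j. cyclic_arc (m * d) (j * d) k) ` {0..<m}"

lemma scycle_edge_eq_cyclic_arc: "scycle_edge k s m j = cyclic_arc (m * (k - s)) (j * (k - s)) k"
  by (auto simp: scycle_edge_def cyclic_arc_def)

lemma scycle_edges_eq_arc_family: "scycle_edges k s m = arc_family m (k - s) k"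
  by (simp add: scycle_edges_def arc_family_def scycle_edge_eq_cyclic_arc)

text \<open>As \<open>j\<close> runs through \<open>{0..<m}\<close>, the position of \<open>v\<close> in the arc following \<open>j * d\<close> runs
  exactly once through the residue class of \<open>v - 1\<close> modulo \<open>d\<close>.\<close>

lemma degree_arc_family:
  assumes "0 < d" "0 < k" "k < m * d" "v < m * d"
  shows "degree (arc_family m d k) v = card {t \<in> {0..<k}. t mod d = (v + m * d - 1) mod d}"
proof -
  define A where "A j = cyclic_arc (m * d) (j * d) k" for j
  define w where "w = v + m * d - 1"
  have jd: "j * d < m * d" if "j < m" for j
    using that assms(1) by simp
  have inj: "inj_on A {0..<m}"
  proof
    fix i j assume "i \<in> {0..<m}" "j \<in> {0..<m}" "A i = A j"
    then have "i * d = j * d"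
      using jd unfolding A_def by (intro inj_onD[OF inj_on_cyclic_arc[OF assms(2,3)]]) auto
    then show "i = j" using assms(1) by simp
  qed
  have "{e \<in> A ` {0..<m}. v \<in> e} = A ` {j \<in> {0..<m}. v \<in> A j}"
    by auto
  then have "degree (arc_family m d k) v = card {j \<in> {0..<m}. v \<in> A j}"
    unfolding degree_def arc_family_def A_def[symmetric]
    by (metis (no_types, lifting) card_image inj inj_on_subset mem_Collect_eq subsetI)
  also have "{j \<in> {0..<m}. v \<in> A j} = {j \<in> {0..<m}. (w - j * d) mod (m * d) < k}"
  proof (intro Collect_cong conj_cong refl)
    fix j assume "j \<in> {0..<m}"
    then have "v \<in> A j \<longleftrightarrow> (v + m * d - Suc (j * d)) mod (m * d) < k"
      unfolding A_def using jd assms(4) by (intro mem_cyclic_arc_iff) auto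
    then show "v \<in> A j \<longleftrightarrow> (w - j * d) mod (m * d) < k"
      by (simp add: w_def)
  qed
  also have "card \<dots> = card {t \<in> {t \<in> {0..<m * d}. t mod d = w mod d}. t < k}"
  proof -
    have "bij_betw (\<lambda>j. (w - j * d) mod (m * d)) {0..<m} {t \<in> {0..<m * d}. t mod d = w mod d}"
      using assms(1) by (intro bij_betw_diff_multiples_mod) (simp_all add: w_def)
    then show ?thesis
      by (intro bij_betw_same_card bij_betw_Collect) auto
  qed
  also have "{t \<in> {t \<in> {0..<m * d}. t mod d = w mod d}. t < k} = {t \<in> {0..<k}. t mod d = w mod d}"
    using assms(3) by auto
  finally show ?thesis
    by (simp add: w_def)
qed

lemma arc_family_regular:
  assumes "0 < d" "0 < k" "k < m * d" "d dvd k"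
  shows "hg_regular {0..<m * d} (arc_family m d k)"
proof -
  have "degree (arc_family m d k) v = k div d" if "v < m * d" for v
    using that assms degree_arc_family card_residue_class[of "(v + m * d - 1) mod d" d k] by simp
  then show ?thesis
    unfolding hg_regular_def by simp
qed

lemma card_cyclic_arc_inter_residue_class:
  assumes "d dvd n" "d dvd p" "k \<le> n" "b < d"
  shows "card (cyclic_arc n p k \<inter> {v \<in> {0..<n}. v mod d = Suc b mod d})
       = card {t \<in> {0..<k}. t mod d = b}"
proof -
  have residue: "(p + Suc t) mod n mod d = Suc b mod d \<longleftrightarrow> t mod d = b" for t
  proof -
    obtain c where "p = d * c"
      using assms(2) ..
    then have "(p + Suc t) mod n mod d = (Suc t + c * d) mod d"
      using assms(1) by (simp add: mod_mod_cancel add.commute mult.commute)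
    also have "\<dots> = Suc t mod d"
      by (rule mod_mult_self1)
    also have "Suc t mod d = Suc b mod d \<longleftrightarrow> t mod d = b mod d"
      using cong_add_rcancel_nat[of t 1 b d] by (simp add: cong_def)
    finally show ?thesis using assms by simp
  qed
  have "cyclic_arc n p k \<subseteq> {0..<n}"
    using assms by (auto simp: cyclic_arc_def)
  then have "cyclic_arc n p k \<inter> {v \<in> {0..<n}. v mod d = Suc b mod d}
      = {v \<in> cyclic_arc n p k. v mod d = Suc b mod d}"
    by auto
  also have "card \<dots> = card {t \<in> {0..<k}. t mod d = b}"
    using bij_betw_cyclic_arc[OF assms(3)] residue
    by (intro bij_betw_same_card[symmetric] bij_betw_Collect) auto
  finally show ?thesis .
qed

text \<open>With \<open>k = q d + r\<close> and \<open>0 < r\<close>, the residues \<open>0\<close> and \<open>r\<close> occur \<open>q + 1\<close> and \<open>q\<close> times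
  among the positions \<open>{0..<k}\<close> of an arc; \<open>b\<close> is whichever of them occurs an odd number
  of times.\<close>

lemma arc_family_odd_bipartite:
  assumes "\<not> d dvd k" "k < m * d"
  shows "odd_bipartite {0..<m * d} (arc_family m d k)"
proof -
  define b where "b = (if even (k div d) then 0 else k mod d)"
  define V1 where "V1 = {v \<in> {0..<m * d}. v mod d = Suc b mod d}"
  have "0 < m * d"
    using le_less_trans[OF le0 assms(2)] .
  then have "d \<noteq> 0"
    by auto
  moreover have "d \<noteq> 1"
    using assms(1) by auto
  ultimately have "2 \<le> d"
    by simp
  then have "b < d"
    by (simp add: b_def)
  have "d \<le> m * d"
    using assms(2) by (cases m) auto
  have "0 < k mod d"
    using assms(1) by (simp add: mod_greater_zero_iff_not_dvd)
  then have "odd (card {t \<in> {0..<k}. t mod d = b})"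
    using card_residue_class[OF \<open>b < d\<close>, of k] by (simp add: b_def)
  then have "\<forall>e \<in> arc_family m d k. odd (card (e \<inter> V1))"
    using card_cyclic_arc_inter_residue_class[of d "m * d" _ k b] \<open>b < d\<close> assms
    by (auto simp: arc_family_def V1_def)
  moreover have "b < m * d" "Suc b mod d < m * d"
    using less_le_trans[OF \<open>b < d\<close> \<open>d \<le> m * d\<close>]
      less_le_trans[OF mod_less_divisor \<open>d \<le> m * d\<close>] \<open>2 \<le> d\<close> by auto
  then have "Suc b mod d \<in> V1" and "b \<in> {0..<m * d} - V1"
    using \<open>2 \<le> d\<close> \<open>b < d\<close> by (auto simp: V1_def mod_Suc)
  ultimately show ?thesis
    unfolding odd_bipartite_def
    by (intro disjI2 exI[of _ V1] exI[of _ "{0..<m * d} - V1"]) (auto simp: V1_def)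
qed

theorem proposition4p2:
  fixes k s m :: nat
  assumes "even k" and "k \<ge> 4" and "1 \<le> s" and "s \<le> k - 1"
    and "m * (k - s) \<ge> 2 * k - s"
    and "\<not> hg_regular (scycle_vertices k s m) (scycle_edges k s m)"
  shows "odd_bipartite (scycle_vertices k s m) (scycle_edges k s m)"
proof -
  have "0 < k" "0 < k - s" "k < m * (k - s)"
    using assms(2-5) by auto
  moreover have scycle: "scycle_vertices k s m = {0..<m * (k - s)}"
    "scycle_edges k s m = arc_family m (k - s) k"
    by (simp_all add: scycle_vertices_def scycle_edges_eq_arc_family)
  ultimately have "\<not> (k - s) dvd k"
    using arc_family_regular assms(6) by metis
  then show ?thesis
    using arc_family_odd_bipartite \<open>k < m * (k - s)\<close> scycle by simp
qed

end
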